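(* Let $f_0\in Y$, $f_0\ge0$, with $\int_{\mathbb R^3}f_0\,dv=1$ and $\mathcal I(f_0|\mathcal M)<\infty$, and let $f(t)=Z_Y(t)f_0$. Then the map $t\mapsto\mathcal I(f(t)|\mathcal M)$ is nonincreasing on $[0,\infty)$ (i.e. $\frac{d}{dt}\mathcal I(f(t)|\mathcal M)\le0$).
   Context: Fix masses $m,m_1>0$, a constant restitution coefficient $\epsilon\in(0,1)$, a bulk velocity $u_1\in\mathbb R^3$ and a temperature $\vartheta_1>0$. Let $\mathcal M_1(v)=\big(\frac{m_1}{2\pi\vartheta_1}\big)^{3/2}\exp\big(-\frac{m_1|v-u_1|^2}{2\vartheta_1}\big)$, $\alpha=\frac{m_1}{m+m_1}$, $\beta=\frac{1-\epsilon}{2}$, $\gamma=\alpha\frac{1-\beta}{1-2\beta}$, $\bar\gamma=(1-\alpha)\frac{1-\beta}{1-2\beta}$, $\vartheta^\#=\frac{(1-\alpha)(1-\beta)}{1-\alpha(1-\beta)}\vartheta_1$, $\mathcal M(v)=\big(\frac{m}{2\pi\vartheta^\#}\big)^{3/2}\exp\big(-\frac{m|v-u_1|^2}{2\vartheta^\#}\big)$. For $v,w\in\mathbb R^3$, $n\in\mathbb S^2$, $q=v-w$, let $v_\star=v-2\gamma(q\cdot n)n$, $w_\star=w+2\bar\gamma(q\cdot n)n$, $\sigma(v)=\int_{\mathbb R^3\times\mathbb S^2}|q\cdot n|\mathcal M_1(w)\,dw\,dn$, and $Q^+f(v)=\epsilon^{-2}\int_{\mathbb R^3\times\mathbb S^2}|q\cdot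 n|f(v_\star)\mathcal M_1(w_\star)\,dw\,dn$. Let $Y=L^1(\mathbb R^3,dv)$ and let $(Z_Y(t))_{t\ge0}$ be the minimal positive contraction $C_0$-semigroup on $Y$ whose generator extends the operator $f\mapsto-\sigma f+Q^+f$ defined on $\{f\in Y:\sigma f\in Y\}$ (the semigroup solving the space-homogeneous linear inelastic Boltzmann equation $\partial_tf=Q^+f-\sigma f$). For nonnegative $f,g\in Y$, the information is $\mathcal I(f|g)=\int_{\mathbb R^3}\big(f\ln f-f\ln g\big)dv$, with conventions $0\ln0=0$ and $x\ln0=-\infty$ for $x>0$. *)

theory Defs
  imports "HOL-Analysis.Analysis"
begin

type_synonym vec3 = "real^3"

definition Maxw :: "real \<Rightarrow> vec3 \<Rightarrow> real \<Rightarrow> vec3 \<Rightarrow> real" where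
  "Maxw ma u th v = (ma / (2 * pi * th)) powr (3/2) * exp (- ma * (norm (v - u))^2 / (2 * th))"

definition alpha_c :: "real \<Rightarrow> real \<Rightarrow> real" where
  "alpha_c m m1 = m1 / (m + m1)"

definition beta_c :: "real \<Rightarrow> real" where
  "beta_c eps = (1 - eps) / 2"

definition gamma_c :: "real \<Rightarrow> real \<Rightarrow> real \<Rightarrow> real" where
  "gamma_c m m1 eps = alpha_c m m1 * (1 - beta_c eps) / (1 - 2 * beta_c eps)"

definition gammabar_c :: "real \<Rightarrow> real \<Rightarrow> real \<Rightarrow> real" where
  "gammabar_c m m1 eps = (1 - alpha_c m m1) * (1 - beta_c eps) / (1 - 2 * beta_c eps)"

definition theta_sharp :: "real \<Rightarrow> real \<Rightarrow> real \<Rightarrow> real \<Rightarrow> real" where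
  "theta_sharp m m1 eps th1 =
     (1 - alpha_c m m1) * (1 - beta_c eps) / (1 - alpha_c m m1 * (1 - beta_c eps)) * th1"

definition M1 :: "real \<Rightarrow> vec3 \<Rightarrow> real \<Rightarrow> vec3 \<Rightarrow> real" where
  "M1 m1 u1 th1 = Maxw m1 u1 th1"

definition Meq :: "real \<Rightarrow> real \<Rightarrow> real \<Rightarrow> vec3 \<Rightarrow> real \<Rightarrow> vec3 \<Rightarrow> real" where
  "Meq m m1 eps u1 th1 = Maxw m u1 (theta_sharp m m1 eps th1)"

text \<open>Standard (non-normalised, total mass 4 pi) surface measure on S^2, realised as the
  cone measure: S(A) = 3 * lambda {r x. x \<in> A, 0 < r \<le> 1}, i.e. the image of
  3 * Lebesgue measure on the unit ball under x \<mapsto> x / |x|.  It is a measure on R^3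
  concentrated on the unit sphere.\<close>
definition sphere_measure :: "vec3 measure" where
  "sphere_measure =
     distr (density lborel (\<lambda>x. ennreal (3 * indicator (ball 0 1) x))) borel
           (\<lambda>x. x /\<^sub>R norm x)"

definition coll_measure :: "(vec3 \<times> vec3) measure" where
  "coll_measure = lborel \<Otimes>\<^sub>M sphere_measure"

definition vstar :: "real \<Rightarrow> real \<Rightarrow> real \<Rightarrow> vec3 \<Rightarrow> vec3 \<Rightarrow> vec3 \<Rightarrow> vec3" where
  "vstar m m1 eps v w n = v - (2 * gamma_c m m1 eps * ((v - w) \<bullet> n)) *\<^sub>R n"

definition wstar :: "real \<Rightarrow> real \<Rightarrow> real \<Rightarrow> vec3 \<Rightarrow> vec3 \<Rightarrow> vec3 \<Rightarrow> vec3" where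
  "wstar m m1 eps v w n = w + (2 * gammabar_c m m1 eps * ((v - w) \<bullet> n)) *\<^sub>R n"

definition sigma_c :: "real \<Rightarrow> vec3 \<Rightarrow> real \<Rightarrow> vec3 \<Rightarrow> real" where
  "sigma_c m1 u1 th1 v =
     (\<integral>p. \<bar>(v - fst p) \<bullet> snd p\<bar> * M1 m1 u1 th1 (fst p) \<partial>coll_measure)"

definition Qplus :: "real \<Rightarrow> real \<Rightarrow> real \<Rightarrow> vec3 \<Rightarrow> real \<Rightarrow> (vec3 \<Rightarrow> real) \<Rightarrow> vec3 \<Rightarrow> real" where
  "Qplus m m1 eps u1 th1 f v = eps powr (-2) *
     (\<integral>p. \<bar>(v - fst p) \<bullet> snd p\<bar> * f (vstar m m1 eps v (fst p) (snd p))
           * M1 m1 u1 th1 (wstar m m1 eps v (fst p) (snd p)) \<partial>coll_measure)"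

text \<open>Elements of Y = L^1(R^3) are represented by integrable functions; equalities and
  inequalities between elements of Y are understood Lebesgue-almost everywhere.
  The L^1 distance is taken in ennreal, so that it is \<infinity> for non-integrable differences.\<close>

definition L1dist :: "(vec3 \<Rightarrow> real) \<Rightarrow> (vec3 \<Rightarrow> real) \<Rightarrow> ennreal" where
  "L1dist f g = (\<integral>\<^sup>+ v. ennreal \<bar>f v - g v\<bar> \<partial>lborel)"

definition L1norm :: "(vec3 \<Rightarrow> real) \<Rightarrow> ennreal" where
  "L1norm f = (\<integral>\<^sup>+ v. ennreal \<bar>f v\<bar> \<partial>lborel)"

definition pos_contr_C0_semigroup :: "(real \<Rightarrow> (vec3 \<Rightarrow> real) \<Rightarrow> (vec3 \<Rightarrow> real)) \<Rightarrow> bool" where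
  "pos_contr_C0_semigroup Z \<longleftrightarrow>
     (\<forall>t\<ge>0. \<forall>f. integrable lborel f \<longrightarrow> integrable lborel (Z t f)) \<and>
     (\<forall>t\<ge>0. \<forall>f g. integrable lborel f \<longrightarrow> integrable lborel g \<longrightarrow>
        (AE v in lborel. f v = g v) \<longrightarrow> (AE v in lborel. Z t f v = Z t g v)) \<and>
     (\<forall>t\<ge>0. \<forall>f g a b. integrable lborel f \<longrightarrow> integrable lborel g \<longrightarrow>
        (AE v in lborel. Z t (\<lambda>x. a * f x + b * g x) v = a * Z t f v + b * Z t g v)) \<and>
     (\<forall>t\<ge>0. \<forall>f. integrable lborel f \<longrightarrow> (AE v in lborel. f v \<ge> 0) \<longrightarrow>
        (AE v in lborel. Z t f v \<ge> 0)) \<and>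
     (\<forall>t\<ge>0. \<forall>f. integrable lborel f \<longrightarrow> L1norm (Z t f) \<le> L1norm f) \<and>
     (\<forall>f. integrable lborel f \<longrightarrow> (AE v in lborel. Z 0 f v = f v)) \<and>
     (\<forall>t\<ge>0. \<forall>s\<ge>0. \<forall>f. integrable lborel f \<longrightarrow>
        (AE v in lborel. Z (t + s) f v = Z t (Z s f) v)) \<and>
     (\<forall>f. integrable lborel f \<longrightarrow> ((\<lambda>t. L1dist (Z t f) f) \<longlongrightarrow> 0) (at_right 0))"

definition generator_extends_A ::
  "real \<Rightarrow> real \<Rightarrow> real \<Rightarrow> vec3 \<Rightarrow> real \<Rightarrow> (real \<Rightarrow> (vec3 \<Rightarrow> real) \<Rightarrow> (vec3 \<Rightarrow> real)) \<Rightarrow> bool" where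
  "generator_extends_A m m1 eps u1 th1 Z \<longleftrightarrow>
     (\<forall>f. integrable lborel f \<longrightarrow> integrable lborel (\<lambda>v. sigma_c m1 u1 th1 v * f v) \<longrightarrow>
        ((\<lambda>t. L1dist (\<lambda>v. (Z t f v - f v) / t)
                      (\<lambda>v. - sigma_c m1 u1 th1 v * f v + Qplus m m1 eps u1 th1 f v))
          \<longlongrightarrow> 0) (at_right 0))"

definition minimal_semigroup ::
  "real \<Rightarrow> real \<Rightarrow> real \<Rightarrow> vec3 \<Rightarrow> real \<Rightarrow> (real \<Rightarrow> (vec3 \<Rightarrow> real) \<Rightarrow> (vec3 \<Rightarrow> real)) \<Rightarrow> bool" where
  "minimal_semigroup m m1 eps u1 th1 Z \<longleftrightarrow>
     pos_contr_C0_semigroup Z \<and> generator_extends_A m m1 eps u1 th1 Z \<and>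
     (\<forall>Z'. pos_contr_C0_semigroup Z' \<and> generator_extends_A m m1 eps u1 th1 Z' \<longrightarrow>
        (\<forall>t\<ge>0. \<forall>f. integrable lborel f \<longrightarrow> (AE v in lborel. f v \<ge> 0) \<longrightarrow>
           (AE v in lborel. Z t f v \<le> Z' t f v)))"

text \<open>Integrand f ln f - f ln g with conventions 0 ln 0 = 0 and x ln 0 = -\<infinity> for x > 0.\<close>
definition info_integrand :: "(vec3 \<Rightarrow> real) \<Rightarrow> (vec3 \<Rightarrow> real) \<Rightarrow> vec3 \<Rightarrow> ereal" where
  "info_integrand f g v =
     (if f v = 0 then 0
      else if g v = 0 then \<infinity>
      else ereal (f v * ln (f v) - f v * ln (g v)))"

definition Info :: "(vec3 \<Rightarrow> real) \<Rightarrow> (vec3 \<Rightarrow> real) \<Rightarrow> ereal" where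
  "Info f g =
     enn2ereal (\<integral>\<^sup>+ v. e2ennreal (max 0 (info_integrand f g v)) \<partial>lborel)
     - enn2ereal (\<integral>\<^sup>+ v. e2ennreal (max 0 (- info_integrand f g v)) \<partial>lborel)"

end

theory Submission
  imports Defs "HOL-Probability.Distributions"
begin

(* Meq is an equilibrium of the collision operator. The shear w \<mapsto> w + (1 - eps)((v - w)\<cdot>n)n
   has Jacobian eps and multiplies (v - w)\<cdot>n by eps, which absorbs the factor eps^-2 in Q+;
   after it the collision is an exchange preserving m |v - u1|^2 / theta_sharp + m1 |w - u1|^2 / th1
   (this is how theta_sharp is chosen), so Meq(v_star) M1(w_star) = Meq(v) M1(w) and
   Q+ Meq = sigma Meq. Hence the generator annihilates Meq and the semigroup fixes it.

   The entropy then decreases by Jensen's inequality for the positive operator Z t fixing M = Meq: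
   f ln (f/M) is the supremum over rational a of the affine minorants a f - e^(a-1) M, each of which
   Z t maps to a minorant of Z t (f ln (f/M)); and a positive L^1 contraction fixing M does not
   increase integrals of functions bounded below by a multiple of M. *)

section \<open>Maxwellians and the collision map\<close>

lemma Maxw_pos: "ma > 0 \<Longrightarrow> th > 0 \<Longrightarrow> Maxw ma u th v > 0"
  unfolding Maxw_def by simp

lemma Maxw_measurable [measurable]: "Maxw ma u th \<in> borel_measurable borel"
  unfolding Maxw_def[abs_def] by measurable

lemma quadratic_energy_balance:
  fixes K K1 a b c d :: real
  assumes "K * c = K1 * d" and "c + d = 2"
  shows "K * (a - c * (a - b))^2 + K1 * (b + d * (a - b))^2 = K * a^2 + K1 * b^2"
proof -
  have "K * (a - c * (a - b))^2 + K1 * (b + d * (a - b))^2 - (K * a^2 + K1 * b^2)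
     = (a - b) * (- 2 * (K * c) * a + 2 * (K1 * d) * b + ((K * c) * c + (K1 * d) * d) * (a - b))"
    by (simp add: power2_eq_square algebra_simps)
  also have "\<dots> = (a - b) * (K * c) * ((c + d - 2) * (a - b))"
    using assms(1) by (simp add: algebra_simps)
  finally show ?thesis
    using assms(2) by simp
qed

lemma norm_diff_scaleR_unit_sq:
  fixes x u n :: "'a::real_inner"
  assumes "norm n = 1"
  shows "(norm (x - t *\<^sub>R n - u))^2 = (norm (x - u))^2 - ((x - u) \<bullet> n)^2 + ((x - u) \<bullet> n - t)^2"
proof -
  have "n \<bullet> n = 1"
    using assms by (simp add: power2_norm_eq_inner[symmetric])
  then show ?thesis
    unfolding power2_norm_eq_inner
    by (simp add: inner_commute power2_eq_square algebra_simps)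
qed

text \<open>The two hypotheses on \<open>c\<close> and \<open>d\<close> are exactly what makes the weighted energy
  \<open>m |v - u|\<^sup>2 / th + m1 |w - u|\<^sup>2 / th1\<close> a collision invariant.\<close>
lemma Maxw_mult_collision_invariant:
  fixes u v w n :: vec3
  assumes "m > 0" "m1 > 0" "th > 0" "th1 > 0" "norm n = 1"
    and "m / th * c = m1 / th1 * d" and "c + d = 2"
  shows "Maxw m u th (v - (c * ((v - w) \<bullet> n)) *\<^sub>R n) * Maxw m1 u th1 (w + (d * ((v - w) \<bullet> n)) *\<^sub>R n)
       = Maxw m u th v * Maxw m1 u th1 w"
proof -
  define a where "a = (v - u) \<bullet> n"
  define b where "b = (w - u) \<bullet> n"
  have vw: "(v - w) \<bullet> n = a - b"
    by (simp add: a_def b_def inner_diff_left)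
  have q: "m / th * (a - c * (a - b))^2 + m1 / th1 * (b + d * (a - b))^2 = m / th * a^2 + m1 / th1 * b^2"
    by (rule quadratic_energy_balance) (use assms in auto)
  have nv: "(norm (v - (c * (a - b)) *\<^sub>R n - u))^2 = (norm (v - u))^2 - a^2 + (a - c * (a - b))^2"
    using norm_diff_scaleR_unit_sq[OF assms(5), of v "c * (a - b)" u] unfolding a_def .
  have nw: "(norm (w + (d * (a - b)) *\<^sub>R n - u))^2 = (norm (w - u))^2 - b^2 + (b + d * (a - b))^2"
    using norm_diff_scaleR_unit_sq[OF assms(5), of w "- d * (a - b)" u] unfolding b_def by simp
  have exponent: "- m * (norm (v - (c * (a - b)) *\<^sub>R n - u))^2 / (2 * th)
        + - m1 * (norm (w + (d * (a - b)) *\<^sub>R n - u))^2 / (2 * th1)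
      = - m * (norm (v - u))^2 / (2 * th) + - m1 * (norm (w - u))^2 / (2 * th1)"
  proof -
    have "- m * (norm (v - (c * (a - b)) *\<^sub>R n - u))^2 / (2 * th)
          + - m1 * (norm (w + (d * (a - b)) *\<^sub>R n - u))^2 / (2 * th1)
        = - (m / th * ((norm (v - u))^2 - a^2) + m1 / th1 * ((norm (w - u))^2 - b^2)
             + (m / th * (a - c * (a - b))^2 + m1 / th1 * (b + d * (a - b))^2)) / 2"
      unfolding nv nw using assms by (simp add: field_simps)
    also have "\<dots> = - m * (norm (v - u))^2 / (2 * th) + - m1 * (norm (w - u))^2 / (2 * th1)"
      unfolding q using assms by (simp add: field_simps)
    finally show ?thesis .
  qed
  have Maxw_product: "Maxw m u th x * Maxw m1 u th1 y
      = (m / (2 * pi * th)) powr (3/2) * (m1 / (2 * pi * th1)) powr (3/2)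
        * exp (- m * (norm (x - u))^2 / (2 * th) + - m1 * (norm (y - u))^2 / (2 * th1))" for x y
    unfolding Maxw_def exp_add by (simp add: ac_simps)
  show ?thesis
    unfolding vw Maxw_product exponent ..
qed

section \<open>A shear change of variables on \<open>\<real>\<^sup>3\<close>\<close>

lemma lborel_eq_density_distr_linear:
  fixes L :: "real^'n::{finite,wellorder} \<Rightarrow> real^'n::_"
  assumes lin: "linear L" and det: "det (matrix L) \<noteq> 0"
  shows "lborel = density (distr lborel borel L) (\<lambda>_. ennreal \<bar>det (matrix L)\<bar>)"
proof (rule lborel_eqI)
  obtain h where h: "linear h" "\<And>x. h (L x) = x" "\<And>x. L (h x) = x"
    using linear_injective_isomorphism[OF lin] det_nz_iff_inj[OF lin] det by metis
  have L_meas [measurable]: "L \<in> borel \<rightarrow>\<^sub>M borel"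
    using lin by (intro borel_measurable_continuous_onI linear_continuous_on) (simp add: linear_conv_bounded_linear)
  fix l u :: "real^'n::{finite,wellorder}"
  assume le: "\<And>b. b \<in> Basis \<Longrightarrow> l \<bullet> b \<le> u \<bullet> b"
  have preimage: "L -` box l u = h ` box l u"
    using h by (auto simp: image_iff) metis
  have h_lmeas: "h ` box l u \<in> lmeasurable"
    using measurable_linear_image[OF h(1)] lmeasurable_open[of "box l u"] by auto
  have h_borel: "h ` box l u \<in> sets borel"
    unfolding preimage[symmetric] by (rule measurable_sets_borel[OF L_meas]) simp
  have "measure lebesgue (box l u) = measure lebesgue (L ` (h ` box l u))"
    using h by (simp add: image_image)
  also have "\<dots> = \<bar>det (matrix L)\<bar> * measure lebesgue (h ` box l u)"
    by (rule measure_linear_image[OF lin h_lmeas])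
  finally have box_eq: "measure lebesgue (box l u) = \<bar>det (matrix L)\<bar> * measure lebesgue (h ` box l u)" .
  have "emeasure lborel (h ` box l u) = emeasure lebesgue (h ` box l u)"
    using h_borel by simp
  also have "\<dots> = measure lebesgue (h ` box l u)"
    using h_lmeas by (simp add: emeasure_eq_measure2)
  finally have "emeasure (density (distr lborel borel L) (\<lambda>_. ennreal \<bar>det (matrix L)\<bar>)) (box l u)
      = ennreal (measure lebesgue (box l u))"
    by (simp add: emeasure_density nn_integral_cmult_indicator emeasure_distr preimage box_eq ennreal_mult)
  also have "\<dots> = (\<Prod>b\<in>Basis. (u - l) \<bullet> b)"
    using le by (simp add: measure_lborel_box_eq)
  finally show "emeasure (density (distr lborel borel L) (\<lambda>_. ennreal \<bar>det (matrix L)\<bar>)) (box l u)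
      = (\<Prod>b\<in>Basis. (u - l) \<bullet> b)" .
qed simp

lemma det_matrix_minus_rank_one:
  fixes n :: "real^3"
  shows "det (matrix (\<lambda>w. w - (c * (w \<bullet> n)) *\<^sub>R n)) = 1 - c * (n \<bullet> n)"
proof -
  have entries: "matrix (\<lambda>w. w - (c * (w \<bullet> n)) *\<^sub>R n) $ i $ j = (if i = j then 1 else 0) - c * n$j * n$i" for i j
    using exhaust_3[of j] by (auto simp: matrix_def axis_def inner_vec_def sum_3)
  show ?thesis
    unfolding det_3 entries by (simp add: inner_vec_def sum_3 algebra_simps)
qed

text \<open>The shear is a translate of the linear map \<open>I - (1 - e) n n\<^sup>T\<close> of determinant \<open>e\<close>;
  it multiplies the normal relative velocity \<open>(v - w)\<cdot>n\<close> by \<open>e\<close>.\<close>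
lemma nn_integral_lborel_shear:
  fixes n v :: vec3 and g :: "vec3 \<Rightarrow> ennreal"
  assumes n: "norm n = 1" and e: "0 < e" and g [measurable]: "g \<in> borel_measurable borel"
  shows "(\<integral>\<^sup>+ w. g w \<partial>lborel) = ennreal e * (\<integral>\<^sup>+ w. g (w + ((1 - e) * ((v - w) \<bullet> n)) *\<^sub>R n) \<partial>lborel)"
proof -
  define L where "L = (\<lambda>w::vec3. w - ((1 - e) * (w \<bullet> n)) *\<^sub>R n)"
  define t where "t = ((1 - e) * (v \<bullet> n)) *\<^sub>R n"
  have shear: "w + ((1 - e) * ((v - w) \<bullet> n)) *\<^sub>R n = t + L w" for w
    by (simp add: L_def t_def algebra_simps)
  have lin: "linear L"
    unfolding L_def by (simp add: linear_iff algebra_simps)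
  have "n \<bullet> n = 1"
    using n by (simp add: power2_norm_eq_inner[symmetric])
  then have det: "det (matrix L) = e"
    unfolding L_def det_matrix_minus_rank_one by simp
  have [measurable]: "L \<in> borel \<rightarrow>\<^sub>M borel"
    using lin by (intro borel_measurable_continuous_onI linear_continuous_on) (simp add: linear_conv_bounded_linear)
  have "(\<integral>\<^sup>+ w. g w \<partial>lborel) = (\<integral>\<^sup>+ w. g w \<partial>distr lborel borel ((+) t))"
    by (simp add: lborel_distr_plus)
  also have "\<dots> = (\<integral>\<^sup>+ x. g (t + x) \<partial>lborel)"
    by (simp add: nn_integral_distr)
  also have "\<dots> = (\<integral>\<^sup>+ x. g (t + x) \<partial>density (distr lborel borel L) (\<lambda>_. ennreal \<bar>det (matrix L)\<bar>))"
    using lborel_eq_density_distr_linear[OF lin] det e by simp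
  also have "\<dots> = ennreal e * (\<integral>\<^sup>+ x. g (t + L x) \<partial>lborel)"
    using det e by (simp add: nn_integral_density nn_integral_distr nn_integral_cmult)
  finally show ?thesis
    by (simp add: shear)
qed

section \<open>The collision measure\<close>

lemma sets_sphere_measure [simp, measurable_cong]: "sets sphere_measure = sets borel"
  by (simp add: sphere_measure_def)

lemma space_sphere_measure [simp]: "space sphere_measure = UNIV"
  by (simp add: sphere_measure_def)

lemma emeasure_sphere_measure_UNIV:
  "emeasure sphere_measure UNIV = 3 * emeasure lborel (ball (0::vec3) 1)"
proof -
  have "emeasure sphere_measure UNIV
      = emeasure (density lborel (\<lambda>x::vec3. ennreal (3 * indicator (ball 0 1) x))) UNIV"
    unfolding sphere_measure_def by (simp add: emeasure_distr)
  also have "\<dots> = (\<integral>\<^sup>+ x. ennreal 3 * indicator (ball (0::vec3) 1) x \<partial>lborel)"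
  proof -
    have "(\<lambda>x::vec3. 3 * indicator (ball 0 1) x :: real) \<in> borel_measurable borel"
      by (intro borel_measurable_times borel_measurable_const borel_measurable_indicator) simp
    then show ?thesis
      by (subst emeasure_density) (auto intro!: nn_integral_cong split: split_indicator)
  qed
  also have "\<dots> = 3 * emeasure lborel (ball (0::vec3) 1)"
    by (simp add: nn_integral_cmult_indicator)
  finally show ?thesis .
qed

interpretation sphere_measure: finite_measure sphere_measure
proof
  show "emeasure sphere_measure (space sphere_measure) \<noteq> \<infinity>"
    using emeasure_lborel_ball_finite[of "0::vec3" 1]
    by (simp add: emeasure_sphere_measure_UNIV ennreal_mult_eq_top_iff)
qed

interpretation lborel_sphere: pair_sigma_finite lborel sphere_measure
  by (simp add: pair_sigma_finite_def lborel.sigma_finite_measure_axioms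
      sphere_measure.sigma_finite_measure_axioms)

lemma AE_sphere_measure_unit: "AE n in sphere_measure. norm n = 1 \<or> n = 0"
proof -
  have "(\<lambda>x::vec3. x /\<^sub>R norm x)
      \<in> measurable (density lborel (\<lambda>x::vec3. ennreal (3 * indicator (ball 0 1) x))) borel"
    by simp
  moreover have "{x \<in> space borel. norm x = 1 \<or> x = (0::vec3)} \<in> sets borel"
    by measurable
  ultimately show ?thesis
    unfolding sphere_measure_def by (subst AE_distr_iff) (auto simp: norm_divide)
qed

lemma sets_coll_measure: "sets coll_measure = sets (borel \<Otimes>\<^sub>M (borel::vec3 measure))"
  unfolding coll_measure_def by (rule sets_pair_measure_cong) simp_all

lemma measurable_coll_measure:
  "f \<in> borel_measurable (borel \<Otimes>\<^sub>M (borel::vec3 measure)) \<Longrightarrow> f \<in> borel_measurable coll_measure"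
  unfolding measurable_cong_sets[OF sets_coll_measure refl] .

lemma nn_integral_coll_measure:
  assumes "f \<in> borel_measurable (borel \<Otimes>\<^sub>M (borel::vec3 measure))"
  shows "(\<integral>\<^sup>+ p. f p \<partial>coll_measure) = (\<integral>\<^sup>+ n. \<integral>\<^sup>+ w. f (w, n) \<partial>lborel \<partial>sphere_measure)"
proof -
  have sets_eq: "sets (lborel \<Otimes>\<^sub>M sphere_measure) = sets (borel \<Otimes>\<^sub>M (borel::vec3 measure))"
    by (rule sets_pair_measure_cong) simp_all
  have "f \<in> borel_measurable (lborel \<Otimes>\<^sub>M sphere_measure)"
    using assms unfolding measurable_cong_sets[OF sets_eq refl] .
  then show ?thesis
    unfolding coll_measure_def by (rule lborel_sphere.nn_integral_snd[symmetric])
qed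

section \<open>Integrability of Maxwellians and of the collision frequency\<close>

lemma nn_integral_gaussian_finite:
  fixes c :: real
  assumes c: "c > 0"
  shows "(\<integral>\<^sup>+ t. ennreal (exp (- c * t^2)) \<partial>lborel) < \<infinity>"
proof -
  define s where "s = sqrt (1 / (2 * c))"
  have s: "s > 0" "2 * s^2 = 1 / c"
    using c by (simp_all add: s_def)
  have "exp (- c * t^2) = sqrt (2 * pi * s^2) * normal_density 0 s t" for t
    unfolding normal_density_def using c s by (simp add: field_simps)
  moreover have "integrable lborel (\<lambda>t. sqrt (2 * pi * s^2) * normal_density 0 s t)"
    by (intro integrable_mult_right integrable_normal_density s)
  ultimately have "integrable lborel (\<lambda>t. exp (- c * t^2))"
    by simp
  then have "(\<integral>\<^sup>+ t. ennreal (exp (- c * t^2)) \<partial>lborel) \<noteq> \<infinity>"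
    by (rule integrableD)
  then show ?thesis
    by (simp add: less_top)
qed

lemma integrable_gaussian:
  fixes c :: real
  assumes c: "c > 0"
  shows "integrable lborel (\<lambda>x::'a::euclidean_space. exp (- c * (norm x)^2))"
proof (rule integrableI_bounded)
  have product: "ennreal (exp (- c * (norm x)^2)) = (\<Prod>b\<in>Basis. ennreal (exp (- c * (x \<bullet> b)^2)))"
    for x :: 'a
  proof -
    have "(norm x)^2 = (\<Sum>b\<in>Basis. (x \<bullet> b)^2)"
      unfolding power2_norm_eq_inner by (subst euclidean_inner) (simp add: power2_eq_square)
    then show ?thesis
      by (simp add: sum_distrib_left exp_sum prod_ennreal)
  qed
  have "(\<integral>\<^sup>+ x. ennreal (exp (- c * (norm (x::'a))^2)) \<partial>lborel)
      = (\<Prod>b\<in>(Basis::'a set). (\<integral>\<^sup>+ t. ennreal (exp (- c * t^2)) \<partial>lborel))"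
    unfolding product by (rule nn_integral_lborel_prod) auto
  also have "\<dots> < \<infinity>"
    using nn_integral_gaussian_finite[OF c] by (simp add: power_less_top_ennreal)
  finally show "(\<integral>\<^sup>+ x. ennreal (norm (exp (- c * (norm (x::'a))^2))) \<partial>lborel) < \<infinity>"
    by simp
qed simp

lemma Maxw_moment_le_gaussian:
  fixes u v :: vec3
  assumes ma: "ma > 0" and th: "th > 0"
  defines "k \<equiv> ma / (2 * th)"
  shows "(1 + norm v) * Maxw ma u th v \<le>
     ((ma / (2 * pi * th)) powr (3/2) * (2 + 4 / k) * exp (k * (norm u)^2)) * exp (- (k / 4) * (norm v)^2)"
proof -
  have k: "k > 0"
    using ma th by (simp add: k_def)
  define C where "C = (ma / (2 * pi * th)) powr (3/2)"
  have C: "C > 0"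
    using ma th by (simp add: C_def)
  have Maxw_eq: "Maxw ma u th v = C * exp (- k * (norm (v - u))^2)"
    unfolding Maxw_def C_def k_def by (simp add: field_simps)
  have "(norm v)^2 \<le> (norm (v - u) + norm u)^2"
    using norm_triangle_ineq[of "v - u" u] by (simp add: power_mono)
  also have "\<dots> \<le> 2 * (norm (v - u))^2 + 2 * (norm u)^2"
    using sum_squares_ge_zero[of "norm (v - u) - norm u" 0] by (simp add: power2_eq_square algebra_simps)
  finally have "k / 2 * (norm v)^2 \<le> k / 2 * (2 * (norm (v - u))^2 + 2 * (norm u)^2)"
    using k by (intro mult_left_mono) auto
  then have gauss: "- k * (norm (v - u))^2 \<le> - (k/2) * (norm v)^2 + k * (norm u)^2"
    by (simp add: algebra_simps)
  have "1 + norm v \<le> 2 + (norm v)^2"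
    using sum_squares_ge_zero[of "norm v - 1" 0]
    by (simp add: power2_eq_square algebra_simps) (use norm_ge_zero[of v] in linarith)
  also have "\<dots> \<le> (2 + 4 / k) * (1 + k / 4 * (norm v)^2)"
    using k by (simp add: field_simps)
  also have "\<dots> \<le> (2 + 4 / k) * exp (k / 4 * (norm v)^2)"
    using k by (intro mult_left_mono exp_ge_add_one_self_aux) auto
  finally have moment: "1 + norm v \<le> (2 + 4 / k) * exp (k / 4 * (norm v)^2)" .
  have "(1 + norm v) * Maxw ma u th v = C * ((1 + norm v) * exp (- k * (norm (v - u))^2))"
    unfolding Maxw_eq by simp
  also have "\<dots> \<le> C * (((2 + 4 / k) * exp (k / 4 * (norm v)^2)) * exp (- (k/2) * (norm v)^2 + k * (norm u)^2))"
    using C moment gauss k by (intro mult_left_mono mult_mono) (auto simp: add_pos_nonneg)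
  also have "\<dots> = (C * (2 + 4 / k) * exp (k * (norm u)^2)) * exp (- (k / 4) * (norm v)^2)"
    by (simp add: mult_exp_exp field_simps)
  finally show ?thesis
    unfolding C_def .
qed

lemma integrable_Maxw_moment:
  assumes ma: "ma > 0" and th: "th > 0"
  shows "integrable lborel (\<lambda>v. (1 + norm v) * Maxw ma u th v)"
proof (rule Bochner_Integration.integrable_bound)
  define k where "k = ma / (2 * th)"
  define C where "C = (ma / (2 * pi * th)) powr (3/2) * (2 + 4 / k) * exp (k * (norm u)^2)"
  have k: "k > 0"
    using ma th by (simp add: k_def)
  show "integrable lborel (\<lambda>v::vec3. C * exp (- (k / 4) * (norm v)^2))"
    using integrable_gaussian[of "k/4"] k by (intro integrable_mult_right) simp
  show "AE v in lborel. norm ((1 + norm v) * Maxw ma u th v) \<le> norm (C * exp (- (k / 4) * (norm v)^2))"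
  proof (rule AE_I2)
    fix v :: vec3
    have "0 \<le> (1 + norm v) * Maxw ma u th v"
      using Maxw_pos[OF ma th] by (simp add: less_imp_le)
    moreover have "(1 + norm v) * Maxw ma u th v \<le> C * exp (- (k / 4) * (norm v)^2)"
      using Maxw_moment_le_gaussian[OF ma th, of v u] unfolding k_def C_def .
    ultimately show "norm ((1 + norm v) * Maxw ma u th v) \<le> norm (C * exp (- (k / 4) * (norm v)^2))"
      by simp
  qed
qed simp

lemma integrable_Maxw:
  assumes "ma > 0" and "th > 0"
  shows "integrable lborel (Maxw ma u th)"
  by (rule Bochner_Integration.integrable_bound[OF integrable_Maxw_moment[OF assms, of u]])
    (use Maxw_pos[OF assms] in \<open>auto simp: less_imp_le\<close>)

lemma integrable_norm_Maxw:
  assumes "ma > 0" and "th > 0"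
  shows "integrable lborel (\<lambda>v. norm v * Maxw ma u th v)"
  by (rule Bochner_Integration.integrable_bound[OF integrable_Maxw_moment[OF assms, of u]])
    (use Maxw_pos[OF assms] in \<open>auto simp: less_imp_le abs_mult\<close>)

lemma M1_pos: "m1 > 0 \<Longrightarrow> th1 > 0 \<Longrightarrow> M1 m1 u1 th1 v > 0"
  unfolding M1_def by (rule Maxw_pos)

lemma sigma_c_nonneg:
  assumes "m1 > 0" and "th1 > 0"
  shows "sigma_c m1 u1 th1 v \<ge> 0"
  unfolding sigma_c_def using M1_pos[OF assms]
  by (intro integral_nonneg_AE AE_I2) (simp add: less_imp_le)

lemma sigma_c_measurable [measurable]: "sigma_c m1 u1 th1 \<in> borel_measurable borel"
proof -
  interpret coll: sigma_finite_measure coll_measure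
    unfolding coll_measure_def by (rule lborel_sphere.sigma_finite_measure_axioms)
  have sets_eq: "sets (borel \<Otimes>\<^sub>M coll_measure)
      = sets (borel \<Otimes>\<^sub>M (borel \<Otimes>\<^sub>M (borel::vec3 measure)) :: (vec3 \<times> vec3 \<times> vec3) measure)"
    by (rule sets_pair_measure_cong[OF refl sets_coll_measure])
  have "(\<lambda>(v, p). \<bar>(v - fst p) \<bullet> snd p\<bar> * M1 m1 u1 th1 (fst p))
      \<in> borel_measurable (borel \<Otimes>\<^sub>M (borel \<Otimes>\<^sub>M (borel::vec3 measure)))"
    unfolding M1_def by measurable
  then have "(\<lambda>v. \<integral>p. \<bar>(v - fst p) \<bullet> snd p\<bar> * M1 m1 u1 th1 (fst p) \<partial>coll_measure) \<in> borel_measurable borel"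
    by (intro coll.borel_measurable_lebesgue_integral) (unfold measurable_cong_sets[OF sets_eq refl])
  then show ?thesis
    unfolding sigma_c_def[abs_def] .
qed

lemma sigma_c_eq_nn_integral:
  assumes "m1 > 0" and "th1 > 0"
  shows "sigma_c m1 u1 th1 v
    = enn2real (\<integral>\<^sup>+ n. \<integral>\<^sup>+ w. ennreal (\<bar>(v - w) \<bullet> n\<bar> * M1 m1 u1 th1 w) \<partial>lborel \<partial>sphere_measure)"
proof -
  have [measurable]: "(\<lambda>p. \<bar>(v - fst p) \<bullet> snd p\<bar> * M1 m1 u1 th1 (fst p)) \<in> borel_measurable (borel \<Otimes>\<^sub>M borel)"
    unfolding M1_def by measurable
  have "sigma_c m1 u1 th1 v = enn2real (\<integral>\<^sup>+ p. ennreal (\<bar>(v - fst p) \<bullet> snd p\<bar> * M1 m1 u1 th1 (fst p)) \<partial>coll_measure)"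
    unfolding sigma_c_def using M1_pos[OF assms]
    by (intro integral_eq_nn_integral measurable_coll_measure AE_I2) (simp_all add: less_imp_le)
  then show ?thesis
    by (subst (asm) nn_integral_coll_measure) simp_all
qed

lemma sigma_c_le:
  assumes m1: "m1 > 0" and th1: "th1 > 0"
  shows "sigma_c m1 u1 th1 v \<le> measure sphere_measure UNIV *
           (norm v * (\<integral>w. M1 m1 u1 th1 w \<partial>lborel) + (\<integral>w. norm w * M1 m1 u1 th1 w \<partial>lborel))"
proof -
  define f where "f = M1 m1 u1 th1"
  define I where "I = norm v * (\<integral>w. f w \<partial>lborel) + (\<integral>w. norm w * f w \<partial>lborel)"
  have f_pos: "f w > 0" for w
    unfolding f_def by (rule M1_pos[OF m1 th1])
  have f: "integrable lborel f" "integrable lborel (\<lambda>w. norm w * f w)"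
    unfolding f_def M1_def using m1 th1 by (rule integrable_Maxw, rule integrable_norm_Maxw)
  have I_nonneg: "I \<ge> 0"
    unfolding I_def using f_pos
    by (intro add_nonneg_nonneg mult_nonneg_nonneg integral_nonneg_AE AE_I2) (auto simp: less_imp_le)
  have I_eq: "(\<integral>\<^sup>+ w. ennreal (norm v * f w + norm w * f w) \<partial>lborel) = ennreal I"
    unfolding I_def using f f_pos
    by (subst nn_integral_eq_integral) (auto simp: less_imp_le)
  have "(\<integral>\<^sup>+ n. \<integral>\<^sup>+ w. ennreal (\<bar>(v - w) \<bullet> n\<bar> * f w) \<partial>lborel \<partial>sphere_measure) \<le> (\<integral>\<^sup>+ n. ennreal I \<partial>sphere_measure)"
    using AE_sphere_measure_unit
  proof (rule nn_integral_mono_AE[OF eventually_mono])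
    fix n :: vec3
    assume n: "norm n = 1 \<or> n = 0"
    show "(\<integral>\<^sup>+ w. ennreal (\<bar>(v - w) \<bullet> n\<bar> * f w) \<partial>lborel) \<le> ennreal I"
      unfolding I_eq[symmetric]
    proof (rule nn_integral_mono)
      fix w
      have "\<bar>(v - w) \<bullet> n\<bar> \<le> norm (v - w) * norm n"
        by (rule Cauchy_Schwarz_ineq2)
      also have "\<dots> \<le> norm v + norm w"
        using n norm_triangle_ineq4[of v w] by auto
      finally show "ennreal (\<bar>(v - w) \<bullet> n\<bar> * f w) \<le> ennreal (norm v * f w + norm w * f w)"
        using f_pos[of w] by (intro ennreal_leI) (simp add: mult_right_mono flip: distrib_right)
    qed
  qed
  also have "\<dots> = ennreal (measure sphere_measure UNIV * I)"
    using I_nonneg by (simp add: sphere_measure.emeasure_eq_measure ennreal_mult mult.commute)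
  finally show ?thesis
    using enn2real_mono I_nonneg unfolding sigma_c_eq_nn_integral[OF m1 th1] I_def f_def
    by fastforce
qed

section \<open>The Maxwellian \<open>Meq\<close> is an equilibrium\<close>

locale inelastic_parameters =
  fixes m m1 eps th1 :: real
  assumes m_pos: "m > 0" and m1_pos: "m1 > 0" and eps_pos: "0 < eps" and eps_less_1: "eps < 1"
    and th1_pos: "th1 > 0"
begin

lemma alpha_c_pos: "0 < alpha_c m m1" and alpha_c_less_1: "alpha_c m m1 < 1"
  using m_pos m1_pos by (auto simp: alpha_c_def)

lemma gamma_c_eq: "gamma_c m m1 eps = alpha_c m m1 * (1 + eps) / (2 * eps)"
  and gammabar_c_eq: "gammabar_c m m1 eps = (1 - alpha_c m m1) * (1 + eps) / (2 * eps)"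
  by (simp_all add: gamma_c_def gammabar_c_def beta_c_def field_simps)

lemma two_minus_alpha_c_pos: "2 - alpha_c m m1 * (1 + eps) > 0"
proof -
  have "alpha_c m m1 * (1 + eps) < 1 * 2"
    using alpha_c_pos alpha_c_less_1 eps_pos eps_less_1 by (intro mult_strict_mono) auto
  then show ?thesis
    by simp
qed

lemma theta_sharp_eq:
  "theta_sharp m m1 eps th1 = (1 - alpha_c m m1) * (1 + eps) / (2 - alpha_c m m1 * (1 + eps)) * th1"
  unfolding theta_sharp_def beta_c_def using two_minus_alpha_c_pos by (simp add: field_simps)

lemma theta_sharp_pos: "theta_sharp m m1 eps th1 > 0"
  unfolding theta_sharp_eq using alpha_c_less_1 eps_pos th1_pos two_minus_alpha_c_pos by simp

lemma energy_balance:
  "m / theta_sharp m m1 eps th1 * (alpha_c m m1 * (1 + eps)) = m1 / th1 * (2 - alpha_c m m1 * (1 + eps))"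
proof -
  define A where "A = alpha_c m m1"
  define D where "D = 2 - A * (1 + eps)"
  have nonzero: "1 - A \<noteq> 0" "1 + eps \<noteq> 0" "D \<noteq> 0" "th1 \<noteq> 0"
    using alpha_c_less_1 eps_pos th1_pos two_minus_alpha_c_pos by (auto simp: A_def D_def)
  have cancel: "m / (B * E / D * t) * (A * E) = (m * A) * D / (B * t)"
    if "B \<noteq> 0" "E \<noteq> 0" "D \<noteq> 0" "t \<noteq> 0" for A B D E t :: real
    using that by (simp add: field_simps)
  have "m / ((1 - A) * (1 + eps) / D * th1) * (A * (1 + eps)) = (m * A) * D / ((1 - A) * th1)"
    using nonzero by (rule cancel)
  also have "m * A = m1 * (1 - A)"
    using m_pos m1_pos by (simp add: A_def alpha_c_def field_simps)
  finally show ?thesis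
    unfolding theta_sharp_eq A_def[symmetric] D_def[symmetric] using nonzero by simp
qed

lemma Meq_pos: "Meq m m1 eps u1 th1 v > 0"
  unfolding Meq_def using m_pos theta_sharp_pos by (rule Maxw_pos)

text \<open>After the shear of \<open>nn_integral_lborel_shear\<close> with \<open>e = eps\<close>, the inelastic collision
  becomes the energy exchange of \<open>Maxw_mult_collision_invariant\<close> with \<open>c = alpha (1 + eps)\<close>.\<close>
lemma gain_integrand_Meq_shear:
  assumes n: "norm n = 1" and W: "W = w + ((1 - eps) * ((v - w) \<bullet> n)) *\<^sub>R n"
  shows "\<bar>(v - W) \<bullet> n\<bar> * Meq m m1 eps u1 th1 (vstar m m1 eps v W n) * M1 m1 u1 th1 (wstar m m1 eps v W n)
       = eps * (Meq m m1 eps u1 th1 v * (\<bar>(v - w) \<bullet> n\<bar> * M1 m1 u1 th1 w))"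
proof -
  define A where "A = alpha_c m m1"
  define s where "s = (v - w) \<bullet> n"
  have "n \<bullet> n = 1"
    using n by (simp add: power2_norm_eq_inner[symmetric])
  then have normal: "(v - W) \<bullet> n = eps * s"
    unfolding W s_def by (simp add: algebra_simps)
  have "2 * gamma_c m m1 eps * (eps * s) = A * (1 + eps) * s"
    unfolding gamma_c_eq A_def using eps_pos by (simp add: field_simps)
  then have vstar: "vstar m m1 eps v W n = v - (A * (1 + eps) * s) *\<^sub>R n"
    unfolding vstar_def normal by simp
  have "wstar m m1 eps v W n = w + ((1 - eps) * s + 2 * gammabar_c m m1 eps * (eps * s)) *\<^sub>R n"
    unfolding wstar_def normal by (simp add: W s_def scaleR_add_left)
  also have "(1 - eps) * s + 2 * gammabar_c m m1 eps * (eps * s) = (2 - A * (1 + eps)) * s"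
    unfolding gammabar_c_eq A_def using eps_pos by (simp add: field_simps)
  finally have wstar: "wstar m m1 eps v W n = w + ((2 - A * (1 + eps)) * s) *\<^sub>R n" .
  have "Meq m m1 eps u1 th1 (vstar m m1 eps v W n) * M1 m1 u1 th1 (wstar m m1 eps v W n)
      = Meq m m1 eps u1 th1 v * M1 m1 u1 th1 w"
    unfolding vstar wstar Meq_def M1_def A_def s_def
    using m_pos m1_pos theta_sharp_pos th1_pos n energy_balance
    by (rule Maxw_mult_collision_invariant) simp
  then show ?thesis
    unfolding normal s_def using eps_pos by (simp add: abs_mult ac_simps)
qed

lemma nn_integral_gain_Meq:
  assumes n: "norm n = 1"
  shows "(\<integral>\<^sup>+ w. ennreal (\<bar>(v - w) \<bullet> n\<bar> * Meq m m1 eps u1 th1 (vstar m m1 eps v w n)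
                          * M1 m1 u1 th1 (wstar m m1 eps v w n)) \<partial>lborel)
       = ennreal (eps^2) * (\<integral>\<^sup>+ w. ennreal (Meq m m1 eps u1 th1 v * (\<bar>(v - w) \<bullet> n\<bar> * M1 m1 u1 th1 w)) \<partial>lborel)"
    (is "(\<integral>\<^sup>+ w. ennreal (?gain w) \<partial>lborel) = _ * (\<integral>\<^sup>+ w. ennreal (?loss w) \<partial>lborel)")
proof -
  have [measurable]: "(\<lambda>w. ennreal (?gain w)) \<in> borel_measurable borel"
    unfolding Meq_def M1_def vstar_def wstar_def by measurable
  have [measurable]: "(\<lambda>w. ennreal (?loss w)) \<in> borel_measurable borel"
    unfolding Meq_def M1_def by measurable
  have shear: "ennreal (?gain (w + ((1 - eps) * ((v - w) \<bullet> n)) *\<^sub>R n)) = ennreal eps * ennreal (?loss w)" for w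
    unfolding gain_integrand_Meq_shear[OF n refl]
    using eps_pos Meq_pos M1_pos[OF m1_pos th1_pos] by (simp add: ennreal_mult less_imp_le)
  have "(\<integral>\<^sup>+ w. ennreal (?gain w) \<partial>lborel)
      = ennreal eps * (\<integral>\<^sup>+ w. ennreal (?gain (w + ((1 - eps) * ((v - w) \<bullet> n)) *\<^sub>R n)) \<partial>lborel)"
    by (rule nn_integral_lborel_shear[OF n eps_pos]) measurable
  also have "\<dots> = ennreal eps * (ennreal eps * (\<integral>\<^sup>+ w. ennreal (?loss w) \<partial>lborel))"
    unfolding shear by (simp add: nn_integral_cmult)
  also have "\<dots> = ennreal (eps^2) * (\<integral>\<^sup>+ w. ennreal (?loss w) \<partial>lborel)"
    using eps_pos by (simp add: ennreal_mult power2_eq_square mult.assoc)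
  finally show ?thesis .
qed

lemma Qplus_Meq: "Qplus m m1 eps u1 th1 (Meq m m1 eps u1 th1) v = sigma_c m1 u1 th1 v * Meq m m1 eps u1 th1 v"
proof -
  define gain where "gain = (\<lambda>p::vec3 \<times> vec3. \<bar>(v - fst p) \<bullet> snd p\<bar>
      * Meq m m1 eps u1 th1 (vstar m m1 eps v (fst p) (snd p)) * M1 m1 u1 th1 (wstar m m1 eps v (fst p) (snd p)))"
  define loss where "loss = (\<lambda>p::vec3 \<times> vec3. Meq m m1 eps u1 th1 v * (\<bar>(v - fst p) \<bullet> snd p\<bar> * M1 m1 u1 th1 (fst p)))"
  have nonneg: "gain p \<ge> 0" "loss p \<ge> 0" for p
    unfolding gain_def loss_def using Meq_pos M1_pos[OF m1_pos th1_pos] by (simp_all add: less_imp_le)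
  have [measurable]: "gain \<in> borel_measurable (borel \<Otimes>\<^sub>M borel)"
    unfolding gain_def Meq_def M1_def vstar_def wstar_def by measurable
  have [measurable]: "loss \<in> borel_measurable (borel \<Otimes>\<^sub>M borel)"
    unfolding loss_def Meq_def M1_def by measurable
  have "(\<integral>\<^sup>+ p. ennreal (gain p) \<partial>coll_measure) = (\<integral>\<^sup>+ n. \<integral>\<^sup>+ w. ennreal (gain (w, n)) \<partial>lborel \<partial>sphere_measure)"
    by (rule nn_integral_coll_measure) measurable
  also have "\<dots> = (\<integral>\<^sup>+ n. ennreal (eps^2) * (\<integral>\<^sup>+ w. ennreal (loss (w, n)) \<partial>lborel) \<partial>sphere_measure)"
    using AE_sphere_measure_unit
  proof (rule nn_integral_cong_AE[OF eventually_mono])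
    fix n :: vec3
    assume "norm n = 1 \<or> n = 0"
    then show "(\<integral>\<^sup>+ w. ennreal (gain (w, n)) \<partial>lborel) = ennreal (eps^2) * (\<integral>\<^sup>+ w. ennreal (loss (w, n)) \<partial>lborel)"
      unfolding gain_def loss_def using nn_integral_gain_Meq by auto
  qed
  also have "\<dots> = ennreal (eps^2) * (\<integral>\<^sup>+ p. ennreal (loss p) \<partial>coll_measure)"
    by (simp add: nn_integral_cmult nn_integral_coll_measure)
  finally have gain_eq: "(\<integral>\<^sup>+ p. ennreal (gain p) \<partial>coll_measure) = ennreal (eps^2) * (\<integral>\<^sup>+ p. ennreal (loss p) \<partial>coll_measure)" .
  have integral_eq: "integral\<^sup>L coll_measure f = enn2real (\<integral>\<^sup>+ p. ennreal (f p) \<partial>coll_measure)"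
    if "f \<in> borel_measurable (borel \<Otimes>\<^sub>M borel)" "\<And>p. f p \<ge> 0" for f
    using that by (intro integral_eq_nn_integral AE_I2 measurable_coll_measure)
  have "Qplus m m1 eps u1 th1 (Meq m m1 eps u1 th1) v = eps powr (-2) * integral\<^sup>L coll_measure gain"
    unfolding Qplus_def gain_def ..
  also have "\<dots> = eps powr (-2) * eps^2 * integral\<^sup>L coll_measure loss"
    using eps_pos nonneg by (simp add: integral_eq gain_eq enn2real_mult)
  also have "eps powr (-2) * eps^2 = 1"
    using eps_pos by (simp add: powr_minus)
  also have "integral\<^sup>L coll_measure loss = Meq m m1 eps u1 th1 v * sigma_c m1 u1 th1 v"
    unfolding loss_def sigma_c_def by (rule integral_mult_right_zero)
  finally show ?thesis
    by (simp add: mult.commute)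
qed

lemma integrable_moment_Meq: "integrable lborel (\<lambda>v. (1 + norm v) * Meq m m1 eps u1 th1 v)"
  unfolding Meq_def using m_pos theta_sharp_pos by (rule integrable_Maxw_moment)

lemma integrable_Meq: "integrable lborel (Meq m m1 eps u1 th1)"
  unfolding Meq_def using m_pos theta_sharp_pos by (rule integrable_Maxw)

lemma integrable_sigma_Meq: "integrable lborel (\<lambda>v. sigma_c m1 u1 th1 v * Meq m m1 eps u1 th1 v)"
proof (rule Bochner_Integration.integrable_bound)
  define S where "S = measure sphere_measure UNIV"
  define I0 where "I0 = (\<integral>w. M1 m1 u1 th1 w \<partial>lborel)"
  define I1 where "I1 = (\<integral>w. norm w * M1 m1 u1 th1 w \<partial>lborel)"
  have nonneg: "S \<ge> 0" "I0 \<ge> 0" "I1 \<ge> 0"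
    unfolding S_def I0_def I1_def using M1_pos[OF m1_pos th1_pos]
    by (auto intro!: integral_nonneg_AE simp: less_imp_le)
  show "integrable lborel (\<lambda>v. (S * (I0 + I1)) * ((1 + norm v) * Meq m m1 eps u1 th1 v))"
    using integrable_moment_Meq by (rule integrable_mult_right)
  show "(\<lambda>v. sigma_c m1 u1 th1 v * Meq m m1 eps u1 th1 v) \<in> borel_measurable lborel"
    unfolding Meq_def by measurable
  show "AE v in lborel. norm (sigma_c m1 u1 th1 v * Meq m m1 eps u1 th1 v)
      \<le> norm ((S * (I0 + I1)) * ((1 + norm v) * Meq m m1 eps u1 th1 v))"
  proof (rule AE_I2)
    fix v :: vec3
    have "sigma_c m1 u1 th1 v \<le> S * (norm v * I0 + I1)"
      unfolding S_def I0_def I1_def using m1_pos th1_pos by (rule sigma_c_le)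
    also have "\<dots> \<le> S * ((I0 + I1) * (1 + norm v))"
      using nonneg by (intro mult_left_mono) (auto simp: algebra_simps)
    also have "\<dots> = S * (I0 + I1) * (1 + norm v)"
      by simp
    finally show "norm (sigma_c m1 u1 th1 v * Meq m m1 eps u1 th1 v)
        \<le> norm ((S * (I0 + I1)) * ((1 + norm v) * Meq m m1 eps u1 th1 v))"
      using sigma_c_nonneg[OF m1_pos th1_pos] Meq_pos[of u1 v] nonneg
      by (simp add: abs_mult mult_right_mono less_imp_le)
  qed
qed

end

section \<open>Positive contraction semigroups on \<open>L\<^sup>1\<close>\<close>

lemma L1dist_eq_mult_difference_quotient:
  assumes [measurable]: "f \<in> borel_measurable lborel" "g \<in> borel_measurable lborel" and h: "h > 0"
  shows "L1dist f g = ennreal h * L1dist (\<lambda>v. (f v - g v) / h) (\<lambda>v. 0)"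
proof -
  have "L1dist (\<lambda>v. (f v - g v) / h) (\<lambda>v. 0) = (\<integral>\<^sup>+ v. ennreal \<bar>f v - g v\<bar> * ennreal (1 / h) \<partial>lborel)"
    unfolding L1dist_def using h by (intro nn_integral_cong) (simp add: ennreal_mult[symmetric])
  also have "\<dots> = L1dist f g * ennreal (1 / h)"
    unfolding L1dist_def by (rule nn_integral_multc) measurable
  finally have "ennreal h * L1dist (\<lambda>v. (f v - g v) / h) (\<lambda>v. 0) = L1dist f g * (ennreal h * ennreal (1 / h))"
    by (simp add: ac_simps)
  also have "ennreal h * ennreal (1 / h) = 1"
    using h by (simp add: ennreal_mult[symmetric])
  finally show ?thesis
    by simp
qed

locale positive_contraction_semigroup =
  fixes Z :: "real \<Rightarrow> (vec3 \<Rightarrow> real) \<Rightarrow> (vec3 \<Rightarrow> real)"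
  assumes pos_contr_C0_semigroup: "pos_contr_C0_semigroup Z"
begin

lemma integrable_Z: "t \<ge> 0 \<Longrightarrow> integrable lborel f \<Longrightarrow> integrable lborel (Z t f)"
  using pos_contr_C0_semigroup unfolding pos_contr_C0_semigroup_def by simp

lemma Z_linear:
  "t \<ge> 0 \<Longrightarrow> integrable lborel f \<Longrightarrow> integrable lborel g \<Longrightarrow>
    AE v in lborel. Z t (\<lambda>x. a * f x + b * g x) v = a * Z t f v + b * Z t g v"
  using pos_contr_C0_semigroup unfolding pos_contr_C0_semigroup_def by simp

lemma Z_nonneg:
  "t \<ge> 0 \<Longrightarrow> integrable lborel f \<Longrightarrow> AE v in lborel. f v \<ge> 0 \<Longrightarrow> AE v in lborel. Z t f v \<ge> 0"
  using pos_contr_C0_semigroup unfolding pos_contr_C0_semigroup_def by simp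

lemma L1norm_Z_le: "t \<ge> 0 \<Longrightarrow> integrable lborel f \<Longrightarrow> L1norm (Z t f) \<le> L1norm f"
  using pos_contr_C0_semigroup unfolding pos_contr_C0_semigroup_def by simp

lemma Z_0: "integrable lborel f \<Longrightarrow> AE v in lborel. Z 0 f v = f v"
  using pos_contr_C0_semigroup unfolding pos_contr_C0_semigroup_def by simp

lemma Z_add:
  "t \<ge> 0 \<Longrightarrow> s \<ge> 0 \<Longrightarrow> integrable lborel f \<Longrightarrow> AE v in lborel. Z (t + s) f v = Z t (Z s f) v"
  using pos_contr_C0_semigroup unfolding pos_contr_C0_semigroup_def by simp

lemma integral_Z_le:
  assumes t: "t \<ge> 0" and q: "integrable lborel q" and q_nonneg: "AE v in lborel. q v \<ge> 0"
  shows "(\<integral>v. Z t q v \<partial>lborel) \<le> (\<integral>v. q v \<partial>lborel)"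
proof -
  have Zq: "integrable lborel (Z t q)"
    using t q by (rule integrable_Z)
  have L1norm_eq: "L1norm g = ennreal (\<integral>v. \<bar>g v\<bar> \<partial>lborel)" if "integrable lborel g" for g
    unfolding L1norm_def using that by (intro nn_integral_eq_integral integrable_abs AE_I2) simp_all
  have "(\<integral>v. Z t q v \<partial>lborel) \<le> (\<integral>v. \<bar>Z t q v\<bar> \<partial>lborel)"
    using Zq by (intro integral_mono integrable_abs) simp_all
  also have "\<dots> \<le> (\<integral>v. \<bar>q v\<bar> \<partial>lborel)"
    using L1norm_Z_le[OF t q] unfolding L1norm_eq[OF Zq] L1norm_eq[OF q]
    by (rule ennreal_le_iff[THEN iffD1, rotated]) (intro integral_nonneg_AE, simp)
  also have "\<dots> = (\<integral>v. q v \<partial>lborel)"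
  proof (rule integral_cong_AE)
    show "AE v in lborel. \<bar>q v\<bar> = q v"
      using q_nonneg by (rule eventually_mono) simp
  qed (intro borel_measurable_abs borel_measurable_integrable q)+
  finally show ?thesis .
qed

lemma L1dist_Z_add_le:
  assumes M: "integrable lborel M" and t: "t \<ge> 0" and h: "h \<ge> 0"
  shows "L1dist (Z (t + h) M) M \<le> L1dist (Z t M) M + L1dist (Z h M) M"
proof -
  have ZhM: "integrable lborel (Z h M)"
    using h M by (rule integrable_Z)
  have ZtM: "integrable lborel (Z t M)"
    using t M by (rule integrable_Z)
  have Zth: "integrable lborel (Z (t + h) M)"
    using t h M by (intro integrable_Z) simp_all
  define D where "D = (\<lambda>x. 1 * Z h M x + (-1) * M x)"
  have D: "integrable lborel D"
    unfolding D_def using ZhM M by (intro Bochner_Integration.integrable_add integrable_mult_right)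
  have semigroup: "AE v in lborel. Z (t + h) M v = Z t (Z h M) v"
    using t h M by (rule Z_add)
  have linear: "AE v in lborel. Z t D v = 1 * Z t (Z h M) v + (-1) * Z t M v"
    unfolding D_def using t ZhM M by (rule Z_linear)
  have [measurable]: "Z (t + h) M \<in> borel_measurable lborel" "Z t M \<in> borel_measurable lborel"
    "M \<in> borel_measurable lborel"
    using Zth ZtM M by auto
  have "AE v in lborel. ennreal \<bar>Z (t + h) M v - Z t M v\<bar> = ennreal \<bar>Z t D v\<bar>"
    using eventually_conj[OF semigroup linear] by (rule eventually_mono) simp
  then have step: "(\<integral>\<^sup>+ v. ennreal \<bar>Z (t + h) M v - Z t M v\<bar> \<partial>lborel) = L1norm (Z t D)"
    unfolding L1norm_def by (rule nn_integral_cong_AE)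
  have "L1dist (Z (t + h) M) M
      \<le> (\<integral>\<^sup>+ v. ennreal \<bar>Z (t + h) M v - Z t M v\<bar> + ennreal \<bar>Z t M v - M v\<bar> \<partial>lborel)"
    unfolding L1dist_def by (intro nn_integral_mono) (simp add: ennreal_plus[symmetric] del: ennreal_plus)
  also have "\<dots> = L1norm (Z t D) + L1dist (Z t M) M"
    unfolding L1dist_def step[symmetric] by (rule nn_integral_add) auto
  also have "\<dots> \<le> L1norm D + L1dist (Z t M) M"
    using L1norm_Z_le[OF t D] by (rule add_right_mono)
  also have "L1norm D = L1dist (Z h M) M"
    unfolding L1norm_def L1dist_def D_def by simp
  finally show ?thesis
    by (simp add: add.commute)
qed

lemma L1dist_Z_mult_le:
  assumes M: "integrable lborel M" and h: "h \<ge> 0"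
  shows "L1dist (Z (real n * h) M) M \<le> of_nat n * L1dist (Z h M) M"
proof (induction n)
  case 0
  have [measurable]: "Z 0 M \<in> borel_measurable lborel" "M \<in> borel_measurable lborel"
    using integrable_Z[of 0, OF _ M] M by (simp_all add: borel_measurable_integrable)
  have "AE v in lborel. ennreal \<bar>Z 0 M v - M v\<bar> = 0"
    using Z_0[OF M] by (rule eventually_mono) simp
  then have "L1dist (Z 0 M) M = 0"
    unfolding L1dist_def by (subst nn_integral_0_iff_AE) measurable
  then show ?case
    by simp
next
  case (Suc n)
  have "L1dist (Z (real (Suc n) * h) M) M = L1dist (Z (real n * h + h) M) M"
    by (simp add: algebra_simps)
  also have "\<dots> \<le> L1dist (Z (real n * h) M) M + L1dist (Z h M) M"
    using h by (intro L1dist_Z_add_le[OF M]) auto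
  also have "\<dots> \<le> of_nat (Suc n) * L1dist (Z h M) M"
    using Suc by (simp add: algebra_simps add_right_mono)
  finally show ?case .
qed

lemma L1dist_Z_le_difference_quotient:
  assumes M: "integrable lborel M" and h: "h > 0"
  shows "L1dist (Z (real n * h) M) M \<le> ennreal (real n * h) * L1dist (\<lambda>v. (Z h M v - M v) / h) (\<lambda>v. 0)"
proof -
  have "L1dist (Z (real n * h) M) M \<le> of_nat n * L1dist (Z h M) M"
    using h by (intro L1dist_Z_mult_le[OF M]) simp
  also have "L1dist (Z h M) M = ennreal h * L1dist (\<lambda>v. (Z h M v - M v) / h) (\<lambda>v. 0)"
    using integrable_Z[of h, OF _ M] M h
    by (intro L1dist_eq_mult_difference_quotient) (simp_all add: borel_measurable_integrable)
  also have "of_nat n * (ennreal h * L1dist (\<lambda>v. (Z h M v - M v) / h) (\<lambda>v. 0))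
      = ennreal (real n * h) * L1dist (\<lambda>v. (Z h M v - M v) / h) (\<lambda>v. 0)"
    using h by (simp add: ennreal_mult ennreal_of_nat_eq_real_of_nat mult.assoc)
  finally show ?thesis .
qed

text \<open>A state annihilated by the generator is fixed: splitting \<open>[0, t]\<close> into \<open>n\<close> steps gives
  \<open>\<parallel>Z t M - M\<parallel> \<le> t \<parallel>(Z (t/n) M - M)/(t/n)\<parallel> \<longrightarrow> 0\<close>.\<close>
lemma Z_fixed_if_generator_vanishes:
  assumes M: "integrable lborel M"
    and gen: "((\<lambda>h. L1dist (\<lambda>v. (Z h M v - M v) / h) (\<lambda>v. 0)) \<longlongrightarrow> 0) (at_right 0)"
    and t: "t \<ge> 0"
  shows "AE v in lborel. Z t M v = M v"
proof (cases "t = 0")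
  case True
  then show ?thesis
    using Z_0[OF M] by simp
next
  case False
  with t have t: "t > 0"
    by simp
  define step where "step = (\<lambda>n::nat. t / real (Suc n))"
  have step_pos: "step n > 0" for n
    using t by (simp add: step_def)
  have "filterlim step (at_right 0) sequentially"
    unfolding filterlim_at
  proof
    show "step \<longlonglongrightarrow> 0"
      unfolding step_def using LIMSEQ_Suc[OF lim_const_over_n[of t]] by simp
    show "\<forall>\<^sub>F n in sequentially. step n \<in> {0<..} \<and> step n \<noteq> 0"
      using step_pos by (simp add: less_imp_neq[symmetric])
  qed
  with gen have "(\<lambda>n. L1dist (\<lambda>v. (Z (step n) M v - M v) / step n) (\<lambda>v. 0)) \<longlonglongrightarrow> 0"
    by (rule filterlim_compose)
  then have "(\<lambda>n. ennreal t * L1dist (\<lambda>v. (Z (step n) M v - M v) / step n) (\<lambda>v. 0)) \<longlonglongrightarrow> ennreal t * 0"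
    by (intro ennreal_tendsto_cmult) auto
  moreover have "L1dist (Z t M) M \<le> ennreal t * L1dist (\<lambda>v. (Z (step n) M v - M v) / step n) (\<lambda>v. 0)" for n
  proof -
    have "real (Suc n) * step n = t"
      unfolding step_def by simp
    then show ?thesis
      using L1dist_Z_le_difference_quotient[OF M step_pos[of n], of "Suc n"] by simp
  qed
  ultimately have "L1dist (Z t M) M \<le> ennreal t * 0"
    by (intro LIMSEQ_le_const) auto
  then have "(\<integral>\<^sup>+ v. ennreal \<bar>Z t M v - M v\<bar> \<partial>lborel) = 0"
    unfolding L1dist_def by simp
  moreover have [measurable]: "Z t M \<in> borel_measurable lborel" "M \<in> borel_measurable lborel"
    using integrable_Z[OF _ M] t M by (simp_all add: borel_measurable_integrable)
  ultimately have "AE v in lborel. ennreal \<bar>Z t M v - M v\<bar> = 0"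
    by (subst (asm) nn_integral_0_iff_AE) measurable
  then show ?thesis
    by (rule eventually_mono) simp
qed

end

section \<open>Relative entropy\<close>

lemma integrable_between:
  fixes g :: "'a \<Rightarrow> real"
  assumes "g \<in> borel_measurable M" and "integrable M l" and "integrable M u"
    and "AE x in M. l x \<le> g x \<and> g x \<le> u x"
  shows "integrable M g"
proof (rule Bochner_Integration.integrable_bound)
  show "integrable M (\<lambda>x. \<bar>l x\<bar> + \<bar>u x\<bar>)"
    using assms(2,3) by (intro Bochner_Integration.integrable_add integrable_abs)
  show "AE x in M. norm (g x) \<le> norm (\<bar>l x\<bar> + \<bar>u x\<bar>)"
    using assms(4) by (rule eventually_mono) (auto simp: abs_if)
qed (use assms(1) in simp)

definition info_density :: "(vec3 \<Rightarrow> real) \<Rightarrow> (vec3 \<Rightarrow> real) \<Rightarrow> vec3 \<Rightarrow> real" where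
  "info_density f g v = (if f v = 0 then 0 else f v * ln (f v) - f v * ln (g v))"

lemma info_integrand_eq_info_density: "g v > 0 \<Longrightarrow> info_integrand f g v = ereal (info_density f g v)"
  unfolding info_integrand_def info_density_def by simp

lemma info_density_measurable [measurable]:
  assumes [measurable]: "f \<in> borel_measurable lborel" "g \<in> borel_measurable lborel"
  shows "info_density f g \<in> borel_measurable lborel"
  unfolding info_density_def[abs_def] by measurable

lemma affine_le_xlnx:
  fixes x a :: real
  assumes x: "x > 0"
  shows "a * x - exp (a - 1) \<le> x * ln x"
proof -
  have "1 + (a - 1 - ln x) \<le> exp (a - 1 - ln x)"
    by (rule exp_ge_add_one_self)
  also have "exp (a - 1 - ln x) = exp (a - 1) / x"
    using x by (simp add: exp_diff)
  finally have "x * (a - ln x) \<le> x * (exp (a - 1) / x)"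
    using x by (intro mult_left_mono) auto
  then show ?thesis
    using x by (simp add: algebra_simps)
qed

lemma info_density_ge_affine:
  assumes g: "g v > 0" and f: "f v \<ge> 0"
  shows "a * f v - exp (a - 1) * g v \<le> info_density f g v"
proof (cases "f v = 0")
  case True
  then show ?thesis
    using g by (simp add: info_density_def)
next
  case False
  with f have f_pos: "f v > 0"
    by simp
  define x where "x = f v / g v"
  have x: "x > 0"
    using f_pos g by (simp add: x_def)
  have "g v * (a * x - exp (a - 1)) \<le> g v * (x * ln x)"
    using affine_le_xlnx[OF x, of a] g by (intro mult_left_mono) auto
  moreover have "g v * (a * x - exp (a - 1)) = a * f v - exp (a - 1) * g v"
    using g by (simp add: x_def field_simps)
  moreover have "g v * (x * ln x) = info_density f g v"
    using g f_pos False by (simp add: x_def info_density_def ln_div algebra_simps)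
  ultimately show ?thesis
    by simp
qed

lemma info_density_ge: "g v > 0 \<Longrightarrow> f v \<ge> 0 \<Longrightarrow> - exp (- 1) * g v \<le> info_density f g v"
  using info_density_ge_affine[of g v f 0] by simp

lemma AE_info_density_ge:
  assumes "\<And>v. g v > 0" and "AE v in lborel. f v \<ge> 0"
  shows "AE v in lborel. - exp (- 1) * g v \<le> info_density f g v"
  using assms(2) by (rule eventually_mono) (rule info_density_ge[OF assms(1)])

text \<open>Conversely \<open>info_density f g v\<close> is the supremum of the affine minorants over rational
  slopes, by continuity in the slope and the choice \<open>a = 1 + ln (f v / g v)\<close>.\<close>
lemma info_density_le_if_rat_affine_le:
  assumes g: "g v > 0" and f: "f v \<ge> 0"
    and le: "\<forall>a\<in>\<rat>. a * f v - exp (a - 1) * g v \<le> c"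
  shows "info_density f g v \<le> c"
proof -
  have "closed {a::real. a * f v - exp (a - 1) * g v \<le> c}"
    by (intro closed_Collect_le continuous_intros)
  moreover have "\<rat> \<subseteq> {a::real. a * f v - exp (a - 1) * g v \<le> c}"
    using le by auto
  ultimately have "closure \<rat> \<subseteq> {a::real. a * f v - exp (a - 1) * g v \<le> c}"
    by (intro closure_minimal)
  then have affine_le: "a * f v - exp (a - 1) * g v \<le> c" for a
    unfolding Rats_closure_real by auto
  show ?thesis
  proof (cases "f v = 0")
    case True
    show ?thesis
    proof (rule ccontr)
      assume "\<not> ?thesis"
      with True have c: "c < 0"
        by (simp add: info_density_def)
      have "exp (ln (- c / (2 * g v))) = - c / (2 * g v)"
        using c g by (simp add: divide_neg_pos)
      then have "c / 2 \<le> c"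
        using affine_le[of "1 + ln (- c / (2 * g v))"] True g by simp
      then show False
        using c by simp
    qed
  next
    case False
    with f have f_pos: "f v > 0"
      by simp
    have "exp (ln (f v / g v)) = f v / g v"
      using f_pos g by simp
    then have "(1 + ln (f v / g v)) * f v - f v \<le> c"
      using affine_le[of "1 + ln (f v / g v)"] g by simp
    then show ?thesis
      using False f_pos g by (simp add: info_density_def ln_div algebra_simps)
  qed
qed

lemma enn2ereal_eq_ereal_enn2real: "x \<noteq> top \<Longrightarrow> enn2ereal x = ereal (enn2real x)"
  by (cases x rule: ennreal_cases) simp_all

lemma Info_eq_positive_minus_negative_part:
  assumes "\<And>v. g v > 0"
  shows "Info f g = enn2ereal (\<integral>\<^sup>+ v. ennreal (info_density f g v) \<partial>lborel)
    - enn2ereal (\<integral>\<^sup>+ v. ennreal (- info_density f g v) \<partial>lborel)"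
proof -
  have "max 0 (ereal x) = ereal (max 0 x)" "max 0 (- ereal x) = ereal (max 0 (- x))" for x
    by (auto simp: max_def)
  then have "e2ennreal (max 0 (ereal x)) = ennreal x" "e2ennreal (max 0 (- ereal x)) = ennreal (- x)" for x
    by (simp_all only: e2ennreal_ereal ennreal_max_0)
  then show ?thesis
    unfolding Info_def info_integrand_eq_info_density[OF assms] by simp
qed

lemma Info_eq_integral:
  assumes "\<And>v. g v > 0" and "integrable lborel (info_density f g)"
  shows "Info f g = ereal (\<integral>v. info_density f g v \<partial>lborel)"
  using assms(2)
  unfolding Info_eq_positive_minus_negative_part[OF assms(1)] real_integrable_def
  by (simp add: enn2ereal_eq_ereal_enn2real real_lebesgue_integral_def[OF assms(2)])

lemma Info_eq_top_if_not_integrable: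
  assumes g_pos: "\<And>v. g v > 0" and g: "integrable lborel g"
    and f_meas: "f \<in> borel_measurable lborel" and f_nonneg: "AE v in lborel. f v \<ge> 0"
    and not_integrable: "\<not> integrable lborel (info_density f g)"
  shows "Info f g = \<infinity>"
proof -
  have [measurable]: "f \<in> borel_measurable lborel" "g \<in> borel_measurable lborel"
    using f_meas g by auto
  have "AE v in lborel. ennreal (- info_density f g v) \<le> ennreal (exp (- 1) * g v)"
    using AE_info_density_ge[of g f, OF g_pos f_nonneg] by (rule eventually_mono) (intro ennreal_leI, simp)
  then have "(\<integral>\<^sup>+ v. ennreal (- info_density f g v) \<partial>lborel) \<le> (\<integral>\<^sup>+ v. ennreal (exp (- 1) * g v) \<partial>lborel)"
    by (rule nn_integral_mono_AE)
  also have "\<dots> < \<infinity>"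
    using integrableD(2)[OF integrable_mult_right[OF g, of "exp (- 1)"]] g_pos
    by (simp add: less_top less_imp_le)
  finally have negative_part: "(\<integral>\<^sup>+ v. ennreal (- info_density f g v) \<partial>lborel) \<noteq> \<infinity>"
    by simp
  with not_integrable have "(\<integral>\<^sup>+ v. ennreal (info_density f g v) \<partial>lborel) = \<infinity>"
    unfolding real_integrable_def by auto
  with negative_part show ?thesis
    unfolding Info_eq_positive_minus_negative_part[OF g_pos] by simp
qed

lemma Info_cong_AE:
  assumes "AE v in lborel. f v = g v"
  shows "Info f M = Info g M"
proof -
  have "AE v in lborel. info_integrand f M v = info_integrand g M v"
    using assms by (rule eventually_mono) (simp add: info_integrand_def)
  then have "(\<integral>\<^sup>+ v. e2ennreal (max 0 (info_integrand f M v)) \<partial>lborel)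
      = (\<integral>\<^sup>+ v. e2ennreal (max 0 (info_integrand g M v)) \<partial>lborel)"
    "(\<integral>\<^sup>+ v. e2ennreal (max 0 (- info_integrand f M v)) \<partial>lborel)
      = (\<integral>\<^sup>+ v. e2ennreal (max 0 (- info_integrand g M v)) \<partial>lborel)"
    by (auto intro!: nn_integral_cong_AE elim!: eventually_mono)
  then show ?thesis
    unfolding Info_def by simp
qed

context positive_contraction_semigroup
begin

lemma integral_Z_le_if_bounded_below:
  assumes t: "t \<ge> 0" and M: "integrable lborel M" and fixed: "AE v in lborel. Z t M v = M v"
    and q: "integrable lborel q" and below: "AE v in lborel. q v \<ge> - c * M v"
  shows "(\<integral>v. Z t q v \<partial>lborel) \<le> (\<integral>v. q v \<partial>lborel)"
proof -
  define p where "p = (\<lambda>v. 1 * q v + c * M v)"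
  have p: "integrable lborel p"
    unfolding p_def using q M by (intro Bochner_Integration.integrable_add integrable_mult_right)
  have Zq: "integrable lborel (Z t q)"
    using t q by (rule integrable_Z)
  have "AE v in lborel. Z t p v = Z t q v + c * M v"
    using eventually_conj[OF Z_linear[OF t q M, of 1 c] fixed] unfolding p_def
    by (rule eventually_mono) simp
  then have "(\<integral>v. Z t q v \<partial>lborel) + c * (\<integral>v. M v \<partial>lborel) = (\<integral>v. Z t p v \<partial>lborel)"
    using integrable_Z[OF t p] Zq M by (subst integral_cong_AE) auto
  also have "\<dots> \<le> (\<integral>v. p v \<partial>lborel)"
    using below by (intro integral_Z_le[OF t p]) (simp add: p_def eventually_mono)
  also have "\<dots> = (\<integral>v. q v \<partial>lborel) + c * (\<integral>v. M v \<partial>lborel)"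
    unfolding p_def using q M by simp
  finally show ?thesis
    by simp
qed

text \<open>Jensen's inequality for the positive operator \<open>Z t\<close> fixing \<open>M\<close>: each affine minorant
  \<open>a f - e\<^sup>a\<^sup>-\<^sup>1 M\<close> of \<open>info_density f M\<close> is mapped to the minorant \<open>a Z t f - e\<^sup>a\<^sup>-\<^sup>1 M\<close>
  of \<open>Z t (info_density f M)\<close>; countably many rational slopes suffice.\<close>
lemma info_density_Z_le:
  assumes t: "t \<ge> 0" and M_pos: "\<And>v. M v > 0" and M: "integrable lborel M"
    and fixed: "AE v in lborel. Z t M v = M v"
    and f: "integrable lborel f" and f_nonneg: "AE v in lborel. f v \<ge> 0"
    and h: "integrable lborel (info_density f M)"
  shows "AE v in lborel. info_density (Z t f) M v \<le> Z t (info_density f M) v"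
proof -
  have affine: "AE v in lborel. a * Z t f v - exp (a - 1) * M v \<le> Z t (info_density f M) v" for a
  proof -
    define k where "k = (\<lambda>x. a * f x + (- exp (a - 1)) * M x)"
    define d where "d = (\<lambda>x. 1 * info_density f M x + (-1) * k x)"
    have k: "integrable lborel k"
      unfolding k_def using f M by (intro Bochner_Integration.integrable_add integrable_mult_right)
    have d: "integrable lborel d"
      unfolding d_def using h k by (intro Bochner_Integration.integrable_add integrable_mult_right)
    have "AE v in lborel. d v \<ge> 0"
      using f_nonneg
    proof (rule eventually_mono)
      fix v
      assume "f v \<ge> 0"
      then have "a * f v - exp (a - 1) * M v \<le> info_density f M v"
        by (rule info_density_ge_affine[OF M_pos])
      then show "d v \<ge> 0"
        by (simp add: d_def k_def)
    qed
    then have Zd_nonneg: "AE v in lborel. Z t d v \<ge> 0"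
      using t d by (intro Z_nonneg)
    have Zd: "AE v in lborel. Z t d v = Z t (info_density f M) v - Z t k v"
      using Z_linear[OF t h k, of 1 "-1"] unfolding d_def by (rule eventually_mono) simp
    have Zk: "AE v in lborel. Z t k v = a * Z t f v - exp (a - 1) * M v"
      using eventually_conj[OF Z_linear[OF t f M, of a "- exp (a - 1)"] fixed] unfolding k_def
      by (rule eventually_mono) simp
    show ?thesis
      using eventually_conj[OF Zd_nonneg eventually_conj[OF Zd Zk]] by (rule eventually_mono) linarith
  qed
  have "AE v in lborel. \<forall>a\<in>\<rat>. a * Z t f v - exp (a - 1) * M v \<le> Z t (info_density f M) v"
    using affine by (subst AE_ball_countable[OF countable_rat]) blast
  moreover have "AE v in lborel. Z t f v \<ge> 0"
    using t f f_nonneg by (rule Z_nonneg)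
  ultimately show ?thesis
    by (rule eventually_elim2) (rule info_density_le_if_rat_affine_le[OF M_pos])
qed

lemma Info_Z_le:
  assumes t: "t \<ge> 0" and M_pos: "\<And>v. M v > 0" and M: "integrable lborel M"
    and fixed: "AE v in lborel. Z t M v = M v"
    and f: "integrable lborel f" and f_nonneg: "AE v in lborel. f v \<ge> 0"
  shows "Info (Z t f) M \<le> Info f M"
proof (cases "integrable lborel (info_density f M)")
  case False
  then have "Info f M = \<infinity>"
    using f f_nonneg by (intro Info_eq_top_if_not_integrable[OF M_pos M]) auto
  then show ?thesis
    by simp
next
  case h: True
  have Zf: "integrable lborel (Z t f)"
    using t f by (rule integrable_Z)
  have Zh: "integrable lborel (Z t (info_density f M))"
    using t h by (rule integrable_Z)
  have Zf_nonneg: "AE v in lborel. Z t f v \<ge> 0"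
    using t f f_nonneg by (rule Z_nonneg)
  have upper: "AE v in lborel. info_density (Z t f) M v \<le> Z t (info_density f M) v"
    using t M_pos M fixed f f_nonneg h by (rule info_density_Z_le)
  have lower: "AE v in lborel. - exp (- 1) * M v \<le> info_density (Z t f) M v"
    using M_pos Zf_nonneg by (rule AE_info_density_ge)
  have "info_density (Z t f) M \<in> borel_measurable lborel"
    using Zf M by (intro info_density_measurable) auto
  then have Zf_h: "integrable lborel (info_density (Z t f) M)"
    using integrable_mult_right[OF M, of "- exp (- 1)"] Zh eventually_conj[OF lower upper]
    by (rule integrable_between)
  have "Info (Z t f) M = ereal (\<integral>v. info_density (Z t f) M v \<partial>lborel)"
    using M_pos Zf_h by (rule Info_eq_integral)
  also have "(\<integral>v. info_density (Z t f) M v \<partial>lborel) \<le> (\<integral>v. Z t (info_density f M) v \<partial>lborel)"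
    using Zf_h Zh upper by (rule integral_mono_AE)
  also have "\<dots> \<le> (\<integral>v. info_density f M v \<partial>lborel)"
    using AE_info_density_ge[OF M_pos f_nonneg] by (rule integral_Z_le_if_bounded_below[OF t M fixed h])
  also have "ereal (\<integral>v. info_density f M v \<partial>lborel) = Info f M"
    using M_pos h by (rule Info_eq_integral[symmetric])
  finally show ?thesis
    by simp
qed

end

lemma (in inelastic_parameters) minimal_semigroup_fixes_Meq:
  assumes Z: "minimal_semigroup m m1 eps u1 th1 Z" and t: "t \<ge> 0"
  shows "AE v in lborel. Z t (Meq m m1 eps u1 th1) v = Meq m m1 eps u1 th1 v"
proof -
  define M where "M = Meq m m1 eps u1 th1"
  have "pos_contr_C0_semigroup Z" and generator: "generator_extends_A m m1 eps u1 th1 Z"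
    using Z unfolding minimal_semigroup_def by simp_all
  then interpret positive_contraction_semigroup Z
    by unfold_locales
  have "(\<lambda>v. - sigma_c m1 u1 th1 v * M v + Qplus m m1 eps u1 th1 M v) = (\<lambda>v. 0)"
    unfolding M_def by (simp add: Qplus_Meq)
  moreover have "((\<lambda>h. L1dist (\<lambda>v. (Z h M v - M v) / h)
      (\<lambda>v. - sigma_c m1 u1 th1 v * M v + Qplus m m1 eps u1 th1 M v)) \<longlongrightarrow> 0) (at_right 0)"
    using generator integrable_Meq integrable_sigma_Meq unfolding generator_extends_A_def M_def by blast
  ultimately show ?thesis
    using integrable_Meq t unfolding M_def by (intro Z_fixed_if_generator_vanishes) simp_all
qed

theorem theorem4p6:
  fixes m m1 eps th1 :: real and u1 :: vec3
    and Z :: "real \<Rightarrow> (vec3 \<Rightarrow> real) \<Rightarrow> (vec3 \<Rightarrow> real)"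
    and f0 :: "vec3 \<Rightarrow> real"
  assumes "m > 0" and "m1 > 0" and "0 < eps" and "eps < 1" and "th1 > 0"
    and "minimal_semigroup m m1 eps u1 th1 Z"
    and "integrable lborel f0"
    and "\<forall>v. f0 v \<ge> 0"
    and "(\<integral>v. f0 v \<partial>lborel) = 1"
    and "Info f0 (Meq m m1 eps u1 th1) < \<infinity>"
  shows "\<forall>s t. 0 \<le> s \<longrightarrow> s \<le> t \<longrightarrow>
           Info (Z t f0) (Meq m m1 eps u1 th1) \<le> Info (Z s f0) (Meq m m1 eps u1 th1)"
proof (intro allI impI)
  fix s t :: real
  assume s: "0 \<le> s" and st: "s \<le> t"
  interpret inelastic_parameters m m1 eps th1
    using assms(1-5) by unfold_locales
  interpret positive_contraction_semigroup Z
    using assms(6) unfolding minimal_semigroup_def by unfold_locales simp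
  have "AE v in lborel. Z t f0 v = Z (t - s) (Z s f0) v"
    using Z_add[of "t - s" s f0] st s assms(7) by simp
  then have "Info (Z t f0) (Meq m m1 eps u1 th1) = Info (Z (t - s) (Z s f0)) (Meq m m1 eps u1 th1)"
    by (rule Info_cong_AE)
  also have "\<dots> \<le> Info (Z s f0) (Meq m m1 eps u1 th1)"
    using st s assms(7,8)
    by (intro Info_Z_le Meq_pos integrable_Meq minimal_semigroup_fixes_Meq[OF assms(6)]
        integrable_Z Z_nonneg AE_I2) simp_all
  finally show "Info (Z t f0) (Meq m m1 eps u1 th1) \<le> Info (Z s f0) (Meq m m1 eps u1 th1)" .
qed

end
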